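(* If $Y^*\in\mathcal L^1(\mathcal Q)$ and $\rho_{\mathcal Q}$ is continuous from above at $0$, then $\overline{\mathcal Q}$ is compact w.r.t. the topology $\sigma(\overline{\mathcal Q},\mathcal X)$, $co(\mathcal Q)$ is a $\sigma(\overline{\mathcal Q},\mathcal X)$-dense subset of $\overline{\mathcal Q}$, and every member of $\overline{\mathcal Q}$ is absolutely continuous w.r.t. $\mathrm P$.
   Context: Let $(\Omega,\mathcal F,(\mathcal F_t)_{0\le t\le T},\mathrm P)$ be a filtered probability space ($0<T<\infty$) with right-continuous filtration, $\mathcal F=\mathcal F_T$, $\mathcal F_0$ trivial and containing all $\mathrm P$-null sets. $\mathcal Q$ is a nonempty set of probability measures on $\mathcal F$, each absolutely continuous w.r.t. $\mathrm P$, $co(\mathcal Q)$ its convex hull. $\mathcal L^1(\mathcal Q)$ is the set of random variables $X$ with $\sup_{\mathrm Q\in\mathcal Q}\mathbb E_{\mathrm Q}[|X|]<\infty$. $Y=(Y_t)_{0\le t\le T}$ is a right-continuous adapted process with bounded paths, quasi left-uppersemicontinuous w.r.t. $\mathrm P$, and $Y^*:=\sup_{t\in[0,T]}|Y_t|$. $\mathcal X$ is the set of random variables $X$ with $|X|\le C(Y^*+1)$ $\mathrm P$-a.s. for some $C>0$; $\rho_{\mathcal Q}(X)=\sup_{\mathrm Q\in\mathcal Q}\mathbb E_{\mathrm Q}[X]$ for $X\in\mathcal X$; $\rho_{\mathcal Q}$ is continuous from above at $0$ if $\rho_{\mathcal Q}(X_n)\searrow0$ whenever $X_n\in\mathcal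 X$, $X_n\searrow0$ $\mathrm P$-a.s. $\overline{\mathcal Q}$ is the set of probability measures $\mathrm Q$ on $\mathcal F$ such that every $X\in\mathcal X$ is $\mathrm Q$-integrable and $\mathbb E_{\mathrm Q}[X]\le\rho_{\mathcal Q}(X)$ for all $X\in\mathcal X$. $\sigma(\overline{\mathcal Q},\mathcal X)$ is the coarsest topology on $\overline{\mathcal Q}$ making all maps $\mathrm Q\mapsto\mathbb E_{\mathrm Q}[X]$, $X\in\mathcal X$, continuous. *)

theory Defs
  imports "HOL-Probability.Probability"
begin

text \<open>The filtered probability space: P is the measure M, the filtration is Fs,
  indexed by the time interval [0,T].\<close>

definition filtration_std :: "'a measure \<Rightarrow> real \<Rightarrow> (real \<Rightarrow> 'a set set) \<Rightarrow> bool" where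
  "filtration_std M T Fs \<longleftrightarrow>
     (\<forall>t\<in>{0..T}. sigma_algebra (space M) (Fs t) \<and> Fs t \<subseteq> sets M)
   \<and> (\<forall>s t. 0 \<le> s \<longrightarrow> s \<le> t \<longrightarrow> t \<le> T \<longrightarrow> Fs s \<subseteq> Fs t)
   \<and> (\<forall>t\<in>{0..<T}. Fs t = (\<Inter>s\<in>{t<..T}. Fs s))
   \<and> Fs T = sets M
   \<and> null_sets M \<subseteq> Fs 0
   \<and> (\<forall>A\<in>Fs 0. measure M A = 0 \<or> measure M A = 1)"

definition stopping_time_std :: "'a measure \<Rightarrow> real \<Rightarrow> (real \<Rightarrow> 'a set set) \<Rightarrow> ('a \<Rightarrow> real) \<Rightarrow> bool" where
  "stopping_time_std M T Fs \<tau> \<longleftrightarrow>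
     (\<forall>\<omega>\<in>space M. 0 \<le> \<tau> \<omega> \<and> \<tau> \<omega> \<le> T)
   \<and> (\<forall>t\<in>{0..T}. {\<omega>\<in>space M. \<tau> \<omega> \<le> t} \<in> Fs t)"

definition quasi_left_usc :: "'a measure \<Rightarrow> real \<Rightarrow> (real \<Rightarrow> 'a set set) \<Rightarrow> (real \<Rightarrow> 'a \<Rightarrow> real) \<Rightarrow> bool" where
  "quasi_left_usc M T Fs Y \<longleftrightarrow>
     (\<forall>\<tau>s \<tau>. (\<forall>n. stopping_time_std M T Fs (\<tau>s n)) \<longrightarrow> stopping_time_std M T Fs \<tau> \<longrightarrow>
        (AE \<omega> in M. incseq (\<lambda>n. \<tau>s n \<omega>) \<and> (\<lambda>n. \<tau>s n \<omega>) \<longlonglongrightarrow> \<tau> \<omega>) \<longrightarrow>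
        (AE \<omega> in M. limsup (\<lambda>n. ereal (Y (\<tau>s n \<omega>) \<omega>)) \<le> ereal (Y (\<tau> \<omega>) \<omega>)))"

definition process_std :: "'a measure \<Rightarrow> real \<Rightarrow> (real \<Rightarrow> 'a set set) \<Rightarrow> (real \<Rightarrow> 'a \<Rightarrow> real) \<Rightarrow> bool" where
  "process_std M T Fs Y \<longleftrightarrow>
     (\<forall>t\<in>{0..T}. Y t \<in> measurable (sigma (space M) (Fs t)) borel)
   \<and> (\<forall>\<omega>\<in>space M. \<forall>t\<in>{0..<T}. continuous (at_right t) (\<lambda>s. Y s \<omega>))
   \<and> (\<forall>\<omega>\<in>space M. \<exists>B. \<forall>t\<in>{0..T}. \<bar>Y t \<omega>\<bar> \<le> B)
   \<and> quasi_left_usc M T Fs Y"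

definition Ystar :: "real \<Rightarrow> (real \<Rightarrow> 'a \<Rightarrow> real) \<Rightarrow> 'a \<Rightarrow> real" where
  "Ystar T Y \<omega> = (SUP t\<in>{0..T}. \<bar>Y t \<omega>\<bar>)"

definition prob_on :: "'a measure \<Rightarrow> 'a measure \<Rightarrow> bool" where
  "prob_on M Q \<longleftrightarrow> prob_space Q \<and> sets Q = sets M"

definition L1Q :: "'a measure \<Rightarrow> 'a measure set \<Rightarrow> ('a \<Rightarrow> real) \<Rightarrow> bool" where
  "L1Q M Qs X \<longleftrightarrow> X \<in> borel_measurable M \<and>
     (SUP Q\<in>Qs. \<integral>\<^sup>+ \<omega>. ennreal \<bar>X \<omega>\<bar> \<partial>Q) < \<infinity>"

definition Xspace :: "'a measure \<Rightarrow> ('a \<Rightarrow> real) \<Rightarrow> ('a \<Rightarrow> real) set" where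
  "Xspace M Ys = {X \<in> borel_measurable M. \<exists>C>0. AE \<omega> in M. \<bar>X \<omega>\<bar> \<le> C * (Ys \<omega> + 1)}"

text \<open>\<rho>_Q(X) = sup over Q of E_Q[X] (real-valued supremum; finite when Y^* \<in> L^1(Q)).\<close>
definition rhoQ :: "'a measure set \<Rightarrow> ('a \<Rightarrow> real) \<Rightarrow> real" where
  "rhoQ Qs X = (SUP Q\<in>Qs. integral\<^sup>L Q X)"

definition cont_from_above_at_0 :: "'a measure \<Rightarrow> ('a \<Rightarrow> real) \<Rightarrow> 'a measure set \<Rightarrow> bool" where
  "cont_from_above_at_0 M Ys Qs \<longleftrightarrow>
     (\<forall>Xn :: nat \<Rightarrow> 'a \<Rightarrow> real. (\<forall>n. Xn n \<in> Xspace M Ys) \<longrightarrow>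
        (AE \<omega> in M. decseq (\<lambda>n. Xn n \<omega>) \<and> (\<lambda>n. Xn n \<omega>) \<longlonglongrightarrow> 0) \<longrightarrow>
        (\<lambda>n. rhoQ Qs (Xn n)) \<longlonglongrightarrow> 0)"

definition Qbar :: "'a measure \<Rightarrow> ('a \<Rightarrow> real) \<Rightarrow> 'a measure set \<Rightarrow> 'a measure set" where
  "Qbar M Ys Qs = {Q. prob_on M Q \<and>
     (\<forall>X\<in>Xspace M Ys. integrable Q X \<and> integral\<^sup>L Q X \<le> rhoQ Qs X)}"

definition sigmaQX :: "'a measure \<Rightarrow> ('a \<Rightarrow> real) \<Rightarrow> 'a measure set \<Rightarrow> 'a measure topology" where
  "sigmaQX M Ys Qs = pullback_topology (Qbar M Ys Qs)
      (\<lambda>Q. restrict (\<lambda>X. integral\<^sup>L Q X) (Xspace M Ys))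
      (product_topology (\<lambda>_. euclideanreal) (Xspace M Ys))"

definition co_measures :: "'a measure \<Rightarrow> 'a measure set \<Rightarrow> 'a measure set" where
  "co_measures M Qs = {\<mu>. sets \<mu> = sets M \<and>
     (\<exists>n::nat. \<exists>c :: nat \<Rightarrow> real. \<exists>Q :: nat \<Rightarrow> 'a measure. n \<ge> 1 \<and>
        (\<forall>i<n. c i \<ge> 0 \<and> Q i \<in> Qs) \<and> (\<Sum>i<n. c i) = 1 \<and>
        (\<forall>A\<in>sets M. emeasure \<mu> A = (\<Sum>i<n. ennreal (c i) * emeasure (Q i) A)))}"

end

theory Submission
  imports Defs
begin

text \<open>The map taking \<open>Q\<close> to its integrals \<open>E\<^sub>Q[X]\<close>, \<open>X \<in> \<X>\<close>, maps \<open>\<Q>bar\<close> into the product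
  of the compact intervals \<open>[-\<rho>(-X), \<rho>(X)]\<close>, and \<open>\<sigma>(\<Q>bar, \<X>)\<close> is the pullback of the product
  topology. The image consists exactly of the linear functionals on \<open>\<X>\<close> dominated by \<open>\<rho>\<close>: such a
  functional is finitely additive on indicators and, by continuity from above of \<open>\<rho>\<close>, countably
  additive, so a Daniell-type construction represents it by a probability measure in \<open>\<Q>bar\<close>.
  Domination by \<open>\<rho>\<close> is a closed condition, so the image is closed, hence compact by Tychonoff's
  theorem. For density, the integrals of \<open>Q \<in> \<Q>bar\<close> satisfy every linear inequality that holds
  for all members of \<open>\<Q>\<close>; in finitely many coordinates a separation argument then puts them in the
  closure of the integrals of \<open>co(\<Q>)\<close>. Finally \<open>Q(A) \<le> \<rho>(1\<^sub>A) = 0\<close> for every \<open>P\<close>-null set \<open>A\<close>.\<close>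

section \<open>Pullback and product topologies\<close>

lemma compact_space_pullback_topology:
  assumes "compactin Y (f ` S)"
  shows "compact_space (pullback_topology S f Y)"
  unfolding compact_space_def compactin_def
proof (intro conjI allI impI)
  have fS: "f ` S \<subseteq> topspace Y"
    using assms compactin_subset_topspace by blast
  then show "topspace (pullback_topology S f Y) \<subseteq> topspace (pullback_topology S f Y)"
    by simp
  fix \<U> assume \<U>: "(\<forall>U\<in>\<U>. openin (pullback_topology S f Y) U)
      \<and> topspace (pullback_topology S f Y) \<subseteq> \<Union> \<U>"
  then have "\<forall>U\<in>\<U>. \<exists>V. openin Y V \<and> U = f -` V \<inter> S"
    by (simp add: openin_pullback_topology)
  then obtain G where G: "\<forall>U\<in>\<U>. openin Y (G U) \<and> U = f -` G U \<inter> S"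
    by (rule bchoice[THEN exE]) blast
  have "f ` S \<subseteq> \<Union> (G ` \<U>)"
    using \<U> G fS by (fastforce simp: topspace_pullback_topology)
  then obtain \<W> where \<W>: "finite \<W>" "\<W> \<subseteq> G ` \<U>" "f ` S \<subseteq> \<Union> \<W>"
    using assms G unfolding compactin_def by (metis imageE)
  then obtain \<F> where \<F>: "finite \<F>" "\<F> \<subseteq> \<U>" "\<W> = G ` \<F>"
    using finite_subset_image[OF \<W>(1,2)] by blast
  have "S \<subseteq> \<Union> \<F>"
  proof
    fix x assume "x \<in> S"
    then obtain U where "U \<in> \<F>" "f x \<in> G U"
      using \<W>(3) \<F>(3) by blast
    then show "x \<in> \<Union> \<F>"
      using \<open>x \<in> S\<close> \<F>(2) G by blast
  qed
  then show "\<exists>\<F>. finite \<F> \<and> \<F> \<subseteq> \<U> \<and> topspace (pullback_topology S f Y) \<subseteq> \<Union> \<F>"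
    using \<F>(1,2) by (auto simp: topspace_pullback_topology)
qed

lemma in_closure_of_pullback_topology:
  assumes "f x \<in> topspace Y"
  shows "x \<in> (pullback_topology S f Y) closure_of A \<longleftrightarrow>
    x \<in> S \<and> f x \<in> Y closure_of (f ` (A \<inter> S))"
proof (cases "x \<in> S")
  case True
  have "(\<forall>T. x \<in> T \<and> (\<exists>U. openin Y U \<and> T = f -` U \<inter> S) \<longrightarrow> (\<exists>y. y \<in> A \<and> y \<in> T)) \<longleftrightarrow>
    (\<forall>U. f x \<in> U \<and> openin Y U \<longrightarrow> (\<exists>z. z \<in> f ` (A \<inter> S) \<and> z \<in> U))"
  proof (intro iffI allI impI)
    fix U assume "\<forall>T. x \<in> T \<and> (\<exists>U. openin Y U \<and> T = f -` U \<inter> S) \<longrightarrow> (\<exists>y. y \<in> A \<and> y \<in> T)"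
      and "f x \<in> U \<and> openin Y U"
    then show "\<exists>z. z \<in> f ` (A \<inter> S) \<and> z \<in> U"
      using True by (metis IntE IntI image_eqI vimageE vimageI)
  next
    fix T assume "\<forall>U. f x \<in> U \<and> openin Y U \<longrightarrow> (\<exists>z. z \<in> f ` (A \<inter> S) \<and> z \<in> U)"
      and "x \<in> T \<and> (\<exists>U. openin Y U \<and> T = f -` U \<inter> S)"
    then show "\<exists>y. y \<in> A \<and> y \<in> T"
      by blast
  qed
  then show ?thesis
    using assms True
    unfolding in_closure_of openin_pullback_topology topspace_pullback_topology
    by simp
qed (simp add: in_closure_of topspace_pullback_topology)

lemma in_closure_of_powertop_real:
  assumes "\<phi> \<in> extensional I" and "S \<subseteq> extensional I"
  shows "\<phi> \<in> powertop_real I closure_of S \<longleftrightarrow>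
    (\<forall>F \<epsilon>. finite F \<longrightarrow> F \<subseteq> I \<longrightarrow> 0 < \<epsilon> \<longrightarrow> (\<exists>\<psi>\<in>S. \<forall>i\<in>F. \<bar>\<psi> i - \<phi> i\<bar> < \<epsilon>))"
    (is "?closure \<longleftrightarrow> ?approx")
proof
  assume ?closure
  show ?approx
  proof (intro allI impI)
    fix F \<epsilon> assume F: "finite F" "F \<subseteq> I" and "0 < (\<epsilon>::real)"
    define V where "V i = (if i \<in> F then ball (\<phi> i) \<epsilon> else UNIV)" for i
    have "openin (powertop_real I) (\<Pi>\<^sub>E i\<in>I. V i)"
      by (rule product_topology_basis) (auto simp: V_def intro: finite_subset[OF _ F(1)])
    moreover have "\<phi> \<in> (\<Pi>\<^sub>E i\<in>I. V i)"
      using assms(1) \<open>0 < \<epsilon>\<close> by (auto simp: V_def PiE_iff)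
    ultimately obtain \<psi> where "\<psi> \<in> S" "\<psi> \<in> (\<Pi>\<^sub>E i\<in>I. V i)"
      using \<open>?closure\<close> unfolding in_closure_of by blast
    moreover have "\<bar>\<psi> i - \<phi> i\<bar> < \<epsilon>" if "\<psi> \<in> (\<Pi>\<^sub>E i\<in>I. V i)" "i \<in> F" for \<psi> i
    proof -
      have "\<psi> i \<in> V i"
        using that F(2) by (auto simp: PiE_iff)
      then show ?thesis
        using that(2) by (simp add: V_def dist_real_def abs_minus_commute)
    qed
    ultimately show "\<exists>\<psi>\<in>S. \<forall>i\<in>F. \<bar>\<psi> i - \<phi> i\<bar> < \<epsilon>"
      by blast
  qed
next
  assume approx: ?approx
  have "\<exists>\<psi>. \<psi> \<in> S \<and> \<psi> \<in> U"
    if U: "openin (powertop_real I) U" "\<phi> \<in> U" for U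
  proof -
    obtain V where V: "\<phi> \<in> (\<Pi>\<^sub>E i\<in>I. V i)" "\<And>i. open (V i)" "finite {i. V i \<noteq> UNIV}"
      "(\<Pi>\<^sub>E i\<in>I. V i) \<subseteq> U"
      using product_topology_open_contains_basis[OF U] by auto
    define F where "F = {i \<in> I. V i \<noteq> UNIV}"
    have F: "finite F" "F \<subseteq> I"
      using V(3) by (auto simp: F_def)
    have "\<forall>i\<in>F. \<exists>e>0. ball (\<phi> i) e \<subseteq> V i"
    proof
      fix i assume "i \<in> F"
      then have "\<phi> i \<in> V i"
        using V(1) by (auto simp: F_def)
      then show "\<exists>e>0. ball (\<phi> i) e \<subseteq> V i"
        using V(2) open_contains_ball by blast
    qed
    then obtain e where e: "\<forall>i\<in>F. 0 < e i \<and> ball (\<phi> i) (e i) \<subseteq> V i"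
      by (rule bchoice[THEN exE]) blast
    define \<epsilon> where "\<epsilon> = Min (insert 1 (e ` F))"
    have "0 < \<epsilon>"
      using F e by (auto simp: \<epsilon>_def)
    then have "\<exists>\<psi>\<in>S. \<forall>i\<in>F. \<bar>\<psi> i - \<phi> i\<bar> < \<epsilon>"
      using approx F by simp
    then obtain \<psi> where "\<psi> \<in> S" and \<psi>: "\<And>i. i \<in> F \<Longrightarrow> \<bar>\<psi> i - \<phi> i\<bar> < \<epsilon>"
      by blast
    have "\<psi> i \<in> V i" if "i \<in> F" for i
    proof -
      have "\<epsilon> \<le> e i"
        using F that by (auto simp: \<epsilon>_def)
      then have "\<psi> i \<in> ball (\<phi> i) (e i)"
        using \<psi>[OF that] by (simp add: dist_real_def abs_minus_commute)
      then show ?thesis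
        using e that by blast
    qed
    then have "\<psi> \<in> (\<Pi>\<^sub>E i\<in>I. V i)"
      using \<open>\<psi> \<in> S\<close> assms(2) by (auto simp: PiE_iff F_def)
    then show ?thesis
      using \<open>\<psi> \<in> S\<close> V(4) by blast
  qed
  then show ?closure
    using assms(1) by (auto simp: in_closure_of PiE_iff)
qed

section \<open>A finite-dimensional separation argument\<close>

text \<open>If \<open>v\<close> stayed \<open>\<epsilon>\<close>-far from \<open>C\<close> on \<open>F\<close>, take \<open>\<psi>0 \<in> C\<close> nearly minimising the squared distance \<open>d\<close>
  to \<open>v\<close>. Mixing a small amount of any \<open>g \<in> G\<close> into \<open>\<psi>0\<close> cannot decrease that distance by much,
  which bounds the linear form \<open>a = v - \<psi>0\<close> on \<open>G\<close> by \<open>a\<cdot>\<psi>0 + d/2\<close>; by domination the same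
  bound holds at \<open>v\<close>, contradicting \<open>a\<cdot>v = a\<cdot>\<psi>0 + |a|\<^sup>2 \<ge> a\<cdot>\<psi>0 + d\<close>.\<close>
lemma approximation_by_mixing:
  fixes F :: "'b set" and C G :: "('b \<Rightarrow> real) set" and v K :: "'b \<Rightarrow> real"
  assumes "finite F" and "C \<noteq> {}" and "0 < \<epsilon>"
    and mix: "\<And>\<psi> g t. \<psi> \<in> C \<Longrightarrow> g \<in> G \<Longrightarrow> 0 < t \<Longrightarrow> t \<le> 1 \<Longrightarrow>
      \<exists>\<psi>'\<in>C. \<forall>i\<in>F. \<psi>' i = (1 - t) * \<psi> i + t * g i"
    and bounded: "\<And>\<psi> i. \<psi> \<in> C \<union> G \<Longrightarrow> i \<in> F \<Longrightarrow> \<bar>\<psi> i\<bar> \<le> K i"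
    and dominated: "\<And>a b. (\<And>g. g \<in> G \<Longrightarrow> (\<Sum>i\<in>F. a i * g i) \<le> b) \<Longrightarrow> (\<Sum>i\<in>F. a i * v i) \<le> b"
  shows "\<exists>\<psi>\<in>C. \<forall>i\<in>F. \<bar>\<psi> i - v i\<bar> < \<epsilon>"
proof (rule ccontr)
  assume "\<not> ?thesis"
  then have far: "\<And>\<psi>. \<psi> \<in> C \<Longrightarrow> \<exists>i\<in>F. \<epsilon> \<le> \<bar>\<psi> i - v i\<bar>"
    by (auto simp: not_less)
  define dist2 where "dist2 \<psi> = (\<Sum>i\<in>F. (\<psi> i - v i)\<^sup>2)" for \<psi> :: "'b \<Rightarrow> real"
  have dist2_ge: "\<epsilon>\<^sup>2 \<le> dist2 \<psi>" if \<psi>: "\<psi> \<in> C" for \<psi>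
  proof -
    obtain i where i: "i \<in> F" "\<epsilon> \<le> \<bar>\<psi> i - v i\<bar>"
      using far[OF \<psi>] by blast
    then have "\<epsilon>\<^sup>2 \<le> \<bar>\<psi> i - v i\<bar>\<^sup>2"
      using \<open>0 < \<epsilon>\<close> by (intro power_mono) auto
    also have "\<dots> = (\<psi> i - v i)\<^sup>2"
      by simp
    also have "\<dots> \<le> dist2 \<psi>"
      unfolding dist2_def using i(1) \<open>finite F\<close> by (intro member_le_sum) auto
    finally show ?thesis .
  qed
  define d where "d = Inf (dist2 ` C)"
  have bdd: "bdd_below (dist2 ` C)"
    using dist2_ge by (auto simp: bdd_below_def)
  have d_le: "d \<le> dist2 \<psi>" if "\<psi> \<in> C" for \<psi>
    unfolding d_def using bdd that by (simp add: cInf_lower)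
  have "\<epsilon>\<^sup>2 \<le> d"
    unfolding d_def using \<open>C \<noteq> {}\<close> dist2_ge by (intro cInf_greatest) auto
  then have "0 < d"
    using \<open>0 < \<epsilon>\<close> by (smt (verit) zero_less_power)
  define D where "D = (\<Sum>i\<in>F. (2 * K i)\<^sup>2)"
  have "0 \<le> D"
    unfolding D_def by (intro sum_nonneg) auto
  define t where "t = min 1 (d / (2 * (D + 1)))"
  have t: "0 < t" "t \<le> 1"
    using \<open>0 < d\<close> \<open>0 \<le> D\<close> by (auto simp: t_def)
  have "t * D \<le> d / (2 * (D + 1)) * D"
    using \<open>0 \<le> D\<close> by (intro mult_right_mono) (auto simp: t_def)
  also have "\<dots> \<le> d / 2"
    using \<open>0 < d\<close> \<open>0 \<le> D\<close> by (simp add: field_simps)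
  finally have tD: "t * D \<le> d / 2" .
  have "Inf (dist2 ` C) < d + t * d / 2"
    using t \<open>0 < d\<close> unfolding d_def by simp
  then obtain \<psi>0 where \<psi>0: "\<psi>0 \<in> C" "dist2 \<psi>0 < d + t * d / 2"
    using cInf_lessD[of "dist2 ` C"] \<open>C \<noteq> {}\<close> by blast
  define a where "a i = v i - \<psi>0 i" for i
  have mixing_gain: "(\<Sum>i\<in>F. a i * g i) \<le> (\<Sum>i\<in>F. a i * \<psi>0 i) + d / 2" if g: "g \<in> G" for g
  proof -
    define b where "b i = g i - \<psi>0 i" for i
    obtain \<psi>' where "\<psi>' \<in> C" and \<psi>': "\<forall>i\<in>F. \<psi>' i = (1 - t) * \<psi>0 i + t * g i"
      using mix[OF \<psi>0(1) g t] by blast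
    have "d \<le> dist2 \<psi>'"
      using d_le[OF \<open>\<psi>' \<in> C\<close>] .
    also have "\<dots> = (\<Sum>i\<in>F. (t * b i - a i)\<^sup>2)"
      unfolding dist2_def a_def b_def by (intro sum.cong refl) (simp add: \<psi>' algebra_simps)
    also have "\<dots> = dist2 \<psi>0 - 2 * t * (\<Sum>i\<in>F. a i * b i) + t\<^sup>2 * (\<Sum>i\<in>F. (b i)\<^sup>2)"
      unfolding dist2_def a_def
      by (simp add: power2_eq_square algebra_simps sum.distrib sum_subtractf sum_distrib_left)
    finally have expand: "d \<le> dist2 \<psi>0 - 2 * t * (\<Sum>i\<in>F. a i * b i) + t\<^sup>2 * (\<Sum>i\<in>F. (b i)\<^sup>2)" .
    have "(\<Sum>i\<in>F. (b i)\<^sup>2) \<le> D"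
      unfolding D_def
    proof (intro sum_mono)
      fix i assume "i \<in> F"
      then have "\<bar>b i\<bar> \<le> 2 * K i"
        using bounded[of g i] bounded[of \<psi>0 i] g \<psi>0(1) unfolding b_def by fastforce
      then have "\<bar>b i\<bar>\<^sup>2 \<le> (2 * K i)\<^sup>2"
        by (intro power_mono) auto
      then show "(b i)\<^sup>2 \<le> (2 * K i)\<^sup>2"
        by simp
    qed
    then have "t\<^sup>2 * (\<Sum>i\<in>F. (b i)\<^sup>2) \<le> t * (t * D)"
      using t by (simp add: power2_eq_square mult_left_mono)
    also have "\<dots> \<le> t * (d / 2)"
      using tD t by (intro mult_left_mono) auto
    finally have "t * (2 * (\<Sum>i\<in>F. a i * b i)) < t * d"
      using expand \<psi>0(2) by (simp add: algebra_simps)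
    then have "(\<Sum>i\<in>F. a i * b i) \<le> d / 2"
      using t by (simp add: mult_less_cancel_left_pos)
    then show ?thesis
      by (simp add: b_def algebra_simps sum_subtractf)
  qed
  have "(\<Sum>i\<in>F. a i * v i) \<le> (\<Sum>i\<in>F. a i * \<psi>0 i) + d / 2"
    using dominated mixing_gain by blast
  moreover have "(\<Sum>i\<in>F. a i * v i) = (\<Sum>i\<in>F. a i * \<psi>0 i) + dist2 \<psi>0"
    unfolding dist2_def a_def by (simp add: sum.distrib[symmetric] power2_eq_square algebra_simps)
  ultimately show False
    using d_le[OF \<psi>0(1)] \<open>0 < d\<close> by linarith
qed

section \<open>The space \<open>\<X>\<close> and the upper expectation \<open>\<rho>\<close>\<close>

lemma Ystar_nonneg:
  assumes "0 \<le> T" and "\<forall>t\<in>{0..T}. \<bar>Y t \<omega>\<bar> \<le> B"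
  shows "0 \<le> Ystar T Y \<omega>"
proof -
  have "bdd_above ((\<lambda>t. \<bar>Y t \<omega>\<bar>) ` {0..T})"
    using assms(2) by (auto simp: bdd_above_def)
  then have "\<bar>Y 0 \<omega>\<bar> \<le> Ystar T Y \<omega>"
    unfolding Ystar_def using assms(1) by (intro cSUP_upper) auto
  then show ?thesis
    by linarith
qed

locale upper_expectation =
  fixes M :: "'a measure" and Ys :: "'a \<Rightarrow> real" and Qs :: "'a measure set"
  assumes Qs_nonempty: "Qs \<noteq> {}"
    and Qs: "\<And>Q. Q \<in> Qs \<Longrightarrow> prob_on M Q \<and> absolutely_continuous M Q"
    and Ys_measurable: "Ys \<in> borel_measurable M"
    and Ys_nonneg: "\<And>\<omega>. \<omega> \<in> space M \<Longrightarrow> 0 \<le> Ys \<omega>"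
    and Ys_L1: "(SUP Q\<in>Qs. \<integral>\<^sup>+ \<omega>. ennreal \<bar>Ys \<omega>\<bar> \<partial>Q) < \<infinity>"
    and continuous_from_above: "cont_from_above_at_0 M Ys Qs"
begin

abbreviation "\<X> \<equiv> Xspace M Ys"
abbreviation "\<rho> \<equiv> rhoQ Qs"
abbreviation "\<Q>bar \<equiv> Qbar M Ys Qs"

lemma
  assumes "Q \<in> Qs"
  shows Qs_prob_space: "prob_space Q"
    and sets_Qs: "sets Q = sets M"
    and space_Qs: "space Q = space M"
    and Qs_absolutely_continuous: "absolutely_continuous M Q"
  using Qs[OF assms] sets_eq_imp_space_eq by (auto simp: prob_on_def)

lemma measurable_Qs: "Q \<in> Qs \<Longrightarrow> f \<in> borel_measurable M \<Longrightarrow> f \<in> borel_measurable Q"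
  using measurable_cong_sets[OF sets_Qs refl] by blast

lemma AE_Qs: "Q \<in> Qs \<Longrightarrow> AE \<omega> in M. P \<omega> \<Longrightarrow> AE \<omega> in Q. P \<omega>"
  using absolutely_continuous_AE[OF sets_Qs Qs_absolutely_continuous] by blast

lemma Xspace_measurable: "X \<in> \<X> \<Longrightarrow> X \<in> borel_measurable M"
  by (simp add: Xspace_def)

lemma Xspace_dominated:
  assumes "Z \<in> borel_measurable M" and "X \<in> \<X>" and "0 \<le> c"
    and "AE \<omega> in M. \<bar>Z \<omega>\<bar> \<le> \<bar>X \<omega>\<bar> + c"
  shows "Z \<in> \<X>"
proof -
  obtain C where C: "0 < C" "AE \<omega> in M. \<bar>X \<omega>\<bar> \<le> C * (Ys \<omega> + 1)"
    using assms(2) by (auto simp: Xspace_def)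
  have "AE \<omega> in M. \<bar>Z \<omega>\<bar> \<le> (C + c) * (Ys \<omega> + 1)"
    using C(2) assms(4) AE_space
  proof eventually_elim
    case (elim \<omega>)
    then have "c \<le> c * (Ys \<omega> + 1)"
      using Ys_nonneg assms(3) by (simp add: mult_le_cancel_left1)
    with elim show ?case
      by (simp add: distrib_right)
  qed
  then show ?thesis
    using assms(1,3) C(1) unfolding Xspace_def by (auto intro!: exI[of _ "C + c"])
qed

lemma Xspace_const: "(\<lambda>_. c) \<in> \<X>"
proof -
  have "(\<lambda>_. 0) \<in> \<X>"
    unfolding Xspace_def by (auto intro!: exI[of _ 1] AE_I2 simp: Ys_nonneg)
  then show ?thesis
    by (rule Xspace_dominated[where c = "\<bar>c\<bar>", rotated]) auto
qed

lemma Xspace_bounded: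
  assumes "X \<in> borel_measurable M" and "\<And>\<omega>. \<omega> \<in> space M \<Longrightarrow> \<bar>X \<omega>\<bar> \<le> B"
  shows "X \<in> \<X>"
  using assms by (intro Xspace_dominated[OF _ Xspace_const[of 0], where c = "\<bar>B\<bar>"] AE_I2) force+

lemma Xspace_indicator: "A \<in> sets M \<Longrightarrow> indicator A \<in> \<X>"
  by (rule Xspace_dominated[OF _ Xspace_const[of 0], where c = 1]) (auto simp: indicator_def)

lemma Xspace_add:
  assumes "X \<in> \<X>" and "Z \<in> \<X>"
  shows "(\<lambda>\<omega>. X \<omega> + Z \<omega>) \<in> \<X>"
proof -
  obtain C D where "0 < C" "AE \<omega> in M. \<bar>X \<omega>\<bar> \<le> C * (Ys \<omega> + 1)"
    and "0 < D" "AE \<omega> in M. \<bar>Z \<omega>\<bar> \<le> D * (Ys \<omega> + 1)"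
    using assms by (auto simp: Xspace_def)
  moreover from this have "AE \<omega> in M. \<bar>X \<omega> + Z \<omega>\<bar> \<le> (C + D) * (Ys \<omega> + 1)"
    by (auto elim!: eventually_elim2 simp: distrib_right)
  ultimately show ?thesis
    using assms unfolding Xspace_def by (auto intro!: exI[of _ "C + D"])
qed

lemma Xspace_scale:
  assumes "X \<in> \<X>"
  shows "(\<lambda>\<omega>. c * X \<omega>) \<in> \<X>"
proof -
  obtain C where C: "0 < C" "AE \<omega> in M. \<bar>X \<omega>\<bar> \<le> C * (Ys \<omega> + 1)"
    using assms by (auto simp: Xspace_def)
  have "AE \<omega> in M. \<bar>c * X \<omega>\<bar> \<le> ((\<bar>c\<bar> + 1) * C) * (Ys \<omega> + 1)"
    using C(2)
  proof eventually_elim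
    case (elim \<omega>)
    have "\<bar>c * X \<omega>\<bar> \<le> (\<bar>c\<bar> + 1) * \<bar>X \<omega>\<bar>"
      by (simp add: abs_mult mult_right_mono)
    also have "\<dots> \<le> (\<bar>c\<bar> + 1) * (C * (Ys \<omega> + 1))"
      using elim by (intro mult_left_mono) auto
    finally show ?case
      by (simp add: mult.assoc)
  qed
  then show ?thesis
    using assms C unfolding Xspace_def by (auto intro!: exI[of _ "(\<bar>c\<bar> + 1) * C"])
qed

lemma Xspace_uminus: "X \<in> \<X> \<Longrightarrow> (\<lambda>\<omega>. - X \<omega>) \<in> \<X>"
  using Xspace_scale[of X "-1"] by simp

lemma Xspace_diff: "X \<in> \<X> \<Longrightarrow> Z \<in> \<X> \<Longrightarrow> (\<lambda>\<omega>. X \<omega> - Z \<omega>) \<in> \<X>"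
  using Xspace_add[OF _ Xspace_uminus, of X Z] by simp

lemma Xspace_sum:
  "finite I \<Longrightarrow> (\<And>i. i \<in> I \<Longrightarrow> f i \<in> \<X>) \<Longrightarrow> (\<lambda>\<omega>. \<Sum>i\<in>I. f i \<omega>) \<in> \<X>"
  by (induction I rule: finite_induct) (auto intro: Xspace_const Xspace_add)

lemma
  assumes "Q \<in> Qs"
  shows integrable_Ys: "integrable Q Ys"
    and integral_Ys_le: "integral\<^sup>L Q Ys \<le> enn2real (SUP Q\<in>Qs. \<integral>\<^sup>+ \<omega>. ennreal \<bar>Ys \<omega>\<bar> \<partial>Q)"
proof -
  let ?S = "SUP Q\<in>Qs. \<integral>\<^sup>+ \<omega>. ennreal \<bar>Ys \<omega>\<bar> \<partial>Q"
  have le: "(\<integral>\<^sup>+ \<omega>. ennreal \<bar>Ys \<omega>\<bar> \<partial>Q) \<le> ?S"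
    using assms by (rule SUP_upper)
  show int: "integrable Q Ys"
    using le Ys_L1 measurable_Qs[OF assms Ys_measurable] by (intro integrableI_bounded) auto
  have "ennreal (norm (integral\<^sup>L Q Ys)) \<le> (\<integral>\<^sup>+ \<omega>. ennreal (norm (Ys \<omega>)) \<partial>Q)"
    by (rule integral_norm_bound_ennreal[OF int])
  also have "\<dots> \<le> ?S"
    using le by simp
  finally show "integral\<^sup>L Q Ys \<le> enn2real ?S"
    using Ys_L1 enn2real_mono by fastforce
qed

lemma Xspace_integrable_bounded:
  assumes "X \<in> \<X>"
  shows "\<exists>K. \<forall>Q\<in>Qs. integrable Q X \<and> \<bar>integral\<^sup>L Q X\<bar> \<le> K"
proof -
  let ?S = "enn2real (SUP Q\<in>Qs. \<integral>\<^sup>+ \<omega>. ennreal \<bar>Ys \<omega>\<bar> \<partial>Q)"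
  obtain C where C: "0 < C" "AE \<omega> in M. \<bar>X \<omega>\<bar> \<le> C * (Ys \<omega> + 1)"
    using assms by (auto simp: Xspace_def)
  have "integrable Q X \<and> \<bar>integral\<^sup>L Q X\<bar> \<le> C * (?S + 1)" if Q: "Q \<in> Qs" for Q
  proof -
    interpret Q: prob_space Q
      by (rule Qs_prob_space[OF Q])
    have dom: "AE \<omega> in Q. \<bar>X \<omega>\<bar> \<le> C * (Ys \<omega> + 1)"
      using AE_Qs[OF Q C(2)] .
    have int_dom: "integrable Q (\<lambda>\<omega>. C * (Ys \<omega> + 1))"
      using integrable_Ys[OF Q] by auto
    have int: "integrable Q X"
      using dom measurable_Qs[OF Q Xspace_measurable[OF assms]] Ys_nonneg space_Qs[OF Q]
      by (intro Bochner_Integration.integrable_bound[OF int_dom]) (auto elim!: eventually_mono)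
    have "\<bar>integral\<^sup>L Q X\<bar> \<le> integral\<^sup>L Q (\<lambda>\<omega>. \<bar>X \<omega>\<bar>)"
      by (rule integral_abs_bound)
    also have "\<dots> \<le> integral\<^sup>L Q (\<lambda>\<omega>. C * (Ys \<omega> + 1))"
      using int int_dom dom by (intro integral_mono_AE) auto
    also have "\<dots> = C * (integral\<^sup>L Q Ys + 1)"
      using integrable_Ys[OF Q] by (simp add: Bochner_Integration.integral_add Q.prob_space)
    also have "\<dots> \<le> C * (?S + 1)"
      using integral_Ys_le[OF Q] C(1) by simp
    finally show ?thesis
      using int by simp
  qed
  then show ?thesis
    by blast
qed

lemma integrable_Xspace: "X \<in> \<X> \<Longrightarrow> Q \<in> Qs \<Longrightarrow> integrable Q X"
  using Xspace_integrable_bounded by blast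

lemma rhoQ_upper: "X \<in> \<X> \<Longrightarrow> Q \<in> Qs \<Longrightarrow> integral\<^sup>L Q X \<le> \<rho> X"
  unfolding rhoQ_def using Xspace_integrable_bounded[of X]
  by (intro cSUP_upper) (auto simp: bdd_above_def abs_le_iff)

lemma rhoQ_least: "(\<And>Q. Q \<in> Qs \<Longrightarrow> integral\<^sup>L Q X \<le> c) \<Longrightarrow> \<rho> X \<le> c"
  unfolding rhoQ_def using Qs_nonempty by (rule cSUP_least)

lemma rhoQ_le_const:
  assumes "X \<in> \<X>" and "AE \<omega> in M. X \<omega> \<le> c"
  shows "\<rho> X \<le> c"
proof (rule rhoQ_least)
  fix Q assume Q: "Q \<in> Qs"
  interpret Q: prob_space Q
    by (rule Qs_prob_space[OF Q])
  have "integral\<^sup>L Q X \<le> integral\<^sup>L Q (\<lambda>_. c)"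
    using integrable_Xspace[OF assms(1) Q] AE_Qs[OF Q assms(2)] by (intro integral_mono_AE) auto
  then show "integral\<^sup>L Q X \<le> c"
    by (simp add: Q.prob_space)
qed

lemma
  assumes "Q \<in> \<Q>bar"
  shows Qbar_prob_space: "prob_space Q"
    and sets_Qbar: "sets Q = sets M"
    and integrable_Qbar: "X \<in> \<X> \<Longrightarrow> integrable Q X"
    and integral_Qbar_le: "X \<in> \<X> \<Longrightarrow> integral\<^sup>L Q X \<le> \<rho> X"
  using assms by (auto simp: Qbar_def prob_on_def)

lemma integral_Qbar_bounds:
  assumes "Q \<in> \<Q>bar" and "X \<in> \<X>"
  shows "- \<rho> (\<lambda>\<omega>. - X \<omega>) \<le> integral\<^sup>L Q X \<and> integral\<^sup>L Q X \<le> \<rho> X"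
  using integral_Qbar_le[OF assms(1) Xspace_uminus[OF assms(2)]] integral_Qbar_le[OF assms]
  by simp

lemma Qs_subset_Qbar: "Qs \<subseteq> \<Q>bar"
  using Qs rhoQ_upper integrable_Xspace by (auto simp: Qbar_def)

lemma Qbar_absolutely_continuous:
  assumes "Q \<in> \<Q>bar"
  shows "absolutely_continuous M Q"
  unfolding absolutely_continuous_def
proof
  fix A assume A: "A \<in> null_sets M"
  then have "A \<in> sets M"
    by auto
  then have A_Q: "A \<in> sets Q"
    using sets_Qbar[OF assms] by simp
  have "AE \<omega> in M. indicator A \<omega> \<le> (0::real)"
    using AE_not_in[OF A] by eventually_elim auto
  then have "\<rho> (indicator A) \<le> 0"
    by (intro rhoQ_le_const Xspace_indicator \<open>A \<in> sets M\<close>)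
  then have "measure Q A \<le> 0"
    using integral_Qbar_le[OF assms Xspace_indicator[OF \<open>A \<in> sets M\<close>]] A_Q
    by (simp add: sets.Int_space_eq2)
  then show "A \<in> null_sets Q"
    using A_Q finite_measure.emeasure_eq_measure[OF prob_space.axioms(1), OF Qbar_prob_space[OF assms]]
    by (simp add: null_sets_def measure_le_0_iff)
qed

end

section \<open>Representing dominated linear functionals by measures\<close>

definition daniell_measure :: "'a measure \<Rightarrow> (('a \<Rightarrow> real) \<Rightarrow> real) \<Rightarrow> 'a measure" where
  "daniell_measure M \<phi> = measure_of (space M) (sets M) (\<lambda>A. ennreal (\<phi> (indicator A)))"

lemma floor_eq_sum_indicator:
  fixes X :: "'a \<Rightarrow> real"
  assumes "\<omega> \<in> S" and "0 \<le> X \<omega>" and "X \<omega> \<le> B" and "0 \<le> m"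
  shows "real_of_int \<lfloor>m * X \<omega>\<rfloor> / m =
    (\<Sum>k\<in>{0..\<lfloor>m * B\<rfloor>}. real_of_int k / m * indicator {\<omega>\<in>S. \<lfloor>m * X \<omega>\<rfloor> = k} \<omega>)"
proof -
  let ?j = "\<lfloor>m * X \<omega>\<rfloor>"
  have "?j \<in> {0..\<lfloor>m * B\<rfloor>}"
    using assms by (auto intro!: floor_mono mult_left_mono)
  moreover have "(\<Sum>k\<in>{0..\<lfloor>m * B\<rfloor>}. real_of_int k / m * indicator {\<omega>\<in>S. \<lfloor>m * X \<omega>\<rfloor> = k} \<omega>) =
    (\<Sum>k\<in>{0..\<lfloor>m * B\<rfloor>}. if k = ?j then real_of_int ?j / m else 0)"
    using assms(1) by (intro sum.cong) (auto simp: indicator_def)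
  ultimately show ?thesis
    by simp
qed

locale dominated_functional = upper_expectation +
  fixes \<phi> :: "('a \<Rightarrow> real) \<Rightarrow> real"
  assumes additive: "X \<in> Xspace M Ys \<Longrightarrow> Z \<in> Xspace M Ys \<Longrightarrow> \<phi> (\<lambda>\<omega>. X \<omega> + Z \<omega>) = \<phi> X + \<phi> Z"
    and homogeneous: "X \<in> Xspace M Ys \<Longrightarrow> \<phi> (\<lambda>\<omega>. c * X \<omega>) = c * \<phi> X"
    and le_rhoQ: "X \<in> Xspace M Ys \<Longrightarrow> \<phi> X \<le> rhoQ Qs X"
begin

lemma uminus: "X \<in> \<X> \<Longrightarrow> \<phi> (\<lambda>\<omega>. - X \<omega>) = - \<phi> X"
  using homogeneous[of X "-1"] by simp

lemma diff: "X \<in> \<X> \<Longrightarrow> Z \<in> \<X> \<Longrightarrow> \<phi> (\<lambda>\<omega>. X \<omega> - Z \<omega>) = \<phi> X - \<phi> Z"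
  using additive[OF _ Xspace_uminus, of X Z] uminus[of Z] by simp

lemma mono:
  assumes "X \<in> \<X>" and "Z \<in> \<X>" and "AE \<omega> in M. X \<omega> \<le> Z \<omega>"
  shows "\<phi> X \<le> \<phi> Z"
proof -
  have "\<phi> (\<lambda>\<omega>. X \<omega> - Z \<omega>) \<le> \<rho> (\<lambda>\<omega>. X \<omega> - Z \<omega>)"
    by (rule le_rhoQ[OF Xspace_diff[OF assms(1,2)]])
  also have "\<dots> \<le> 0"
    using assms by (intro rhoQ_le_const Xspace_diff) auto
  finally show ?thesis
    using diff[OF assms(1,2)] by simp
qed

lemma cong:
  assumes "X \<in> \<X>" and "Z \<in> \<X>" and "AE \<omega> in M. X \<omega> = Z \<omega>"
  shows "\<phi> X = \<phi> Z"
proof -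
  have "AE \<omega> in M. X \<omega> \<le> Z \<omega>" and "AE \<omega> in M. Z \<omega> \<le> X \<omega>"
    using assms(3) by (eventually_elim, simp)+
  then show ?thesis
    using mono assms(1,2) by (blast intro: antisym)
qed

lemma const: "\<phi> (\<lambda>_. c) = c"
proof -
  have le: "\<phi> (\<lambda>_. c) \<le> c" for c
  proof -
    have "\<rho> (\<lambda>_. c) \<le> c"
      by (rule rhoQ_le_const[OF Xspace_const]) simp
    then show ?thesis
      using le_rhoQ[OF Xspace_const[of c]] by linarith
  qed
  have "\<phi> (\<lambda>_. 1) = 1"
    using le[of 1] le[of "-1"] uminus[OF Xspace_const[of 1]] by simp
  then show ?thesis
    using homogeneous[OF Xspace_const[of 1], of c] by simp
qed

lemma sum:
  "finite I \<Longrightarrow> (\<And>i. i \<in> I \<Longrightarrow> f i \<in> \<X>) \<Longrightarrow> \<phi> (\<lambda>\<omega>. \<Sum>i\<in>I. f i \<omega>) = (\<Sum>i\<in>I. \<phi> (f i))"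
proof (induction I rule: finite_induct)
  case empty
  then show ?case
    using const[of 0] by simp
next
  case (insert i I)
  then show ?case
    using additive[of "f i" "\<lambda>\<omega>. \<Sum>i\<in>I. f i \<omega>"] Xspace_sum[of I f] by simp
qed

lemma nonneg: "X \<in> \<X> \<Longrightarrow> AE \<omega> in M. 0 \<le> X \<omega> \<Longrightarrow> 0 \<le> \<phi> X"
  using mono[OF Xspace_const[of 0], of X] const[of 0] by simp

lemma bounds:
  assumes "X \<in> \<X>" and "\<And>\<omega>. \<omega> \<in> space M \<Longrightarrow> 0 \<le> X \<omega> \<and> X \<omega> \<le> c"
  shows "0 \<le> \<phi> X \<and> \<phi> X \<le> c"
  using nonneg[OF assms(1)] le_rhoQ[OF assms(1)] rhoQ_le_const[OF assms(1), of c] assms(2)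
  by (metis (mono_tags, lifting) AE_I2 order.trans)

lemma tendsto_zero:
  assumes "\<And>n. Xn n \<in> \<X>" and "AE \<omega> in M. decseq (\<lambda>n. Xn n \<omega>) \<and> (\<lambda>n. Xn n \<omega>) \<longlonglongrightarrow> 0"
  shows "(\<lambda>n. \<phi> (Xn n)) \<longlonglongrightarrow> 0"
proof (rule tendsto_sandwich[of "\<lambda>_. 0" _ _ "\<lambda>n. \<rho> (Xn n)"])
  have "0 \<le> \<phi> (Xn n)" for n
  proof (rule nonneg[OF assms(1)])
    show "AE \<omega> in M. 0 \<le> Xn n \<omega>"
      using assms(2) by eventually_elim (metis decseq_ge)
  qed
  then show "\<forall>\<^sub>F n in sequentially. 0 \<le> \<phi> (Xn n)"
    by simp
  show "\<forall>\<^sub>F n in sequentially. \<phi> (Xn n) \<le> \<rho> (Xn n)"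
    using le_rhoQ assms(1) by simp
  show "(\<lambda>n. \<rho> (Xn n)) \<longlonglongrightarrow> 0"
    using continuous_from_above assms unfolding cont_from_above_at_0_def by blast
qed simp

lemma countably_additive_indicator:
  "countably_additive (sets M) (\<lambda>A. ennreal (\<phi> (indicator A)))"
  unfolding countably_additive_def
proof safe
  fix A :: "nat \<Rightarrow> 'a set"
  assume A: "range A \<subseteq> sets M" "disjoint_family A" "\<Union> (range A) \<in> sets M"
  let ?U = "\<Union> (range A)"
  have A_sets: "A i \<in> sets M" for i
    using A(1) by auto
  define D where "D n = (\<lambda>\<omega>. indicator ?U \<omega> - (\<Sum>i<n. indicator (A i) \<omega>) :: real)" for n
  have D: "D n \<in> \<X>" for n
    unfolding D_def using A_sets A(3) by (intro Xspace_diff Xspace_indicator Xspace_sum) auto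
  have sums: "(\<lambda>i. indicator (A i) \<omega>) sums (indicator ?U \<omega> :: real)" for \<omega>
    using A(2) by (intro indicator_sums) (auto simp: disjoint_family_on_def)
  have "(\<lambda>n. D n \<omega>) \<longlonglongrightarrow> indicator ?U \<omega> - indicator ?U \<omega>" for \<omega>
    unfolding D_def using sums[of \<omega>] unfolding sums_def by (intro tendsto_diff tendsto_const)
  moreover have "decseq (\<lambda>n. D n \<omega>)" for \<omega>
    by (rule decseq_SucI) (simp add: D_def)
  ultimately have "(\<lambda>n. \<phi> (D n)) \<longlonglongrightarrow> 0"
    by (intro tendsto_zero D) auto
  then have "(\<lambda>n. \<phi> (indicator ?U) - \<phi> (D n)) \<longlonglongrightarrow> \<phi> (indicator ?U) - 0"
    by (intro tendsto_diff tendsto_const)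
  moreover have "\<phi> (indicator ?U) - \<phi> (D n) = (\<Sum>i<n. \<phi> (indicator (A i)))" for n
    unfolding D_def using A_sets A(3)
    by (simp add: diff sum Xspace_indicator Xspace_sum)
  ultimately have "(\<lambda>i. \<phi> (indicator (A i))) sums \<phi> (indicator ?U)"
    by (simp add: sums_def)
  then show "(\<Sum>i. ennreal (\<phi> (indicator (A i)))) = ennreal (\<phi> (indicator ?U))"
    using nonneg[OF Xspace_indicator[OF A_sets]]
    by (subst suminf_ennreal2) (auto simp: sums_iff)
qed

abbreviation "Q\<phi> \<equiv> daniell_measure M \<phi>"

lemma sets_daniell_measure: "sets Q\<phi> = sets M"
  and space_daniell_measure: "space Q\<phi> = space M"
  unfolding daniell_measure_def by (simp_all add: sets.space_closed sets.sigma_sets_eq)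

lemma emeasure_daniell_measure: "A \<in> sets M \<Longrightarrow> emeasure Q\<phi> A = ennreal (\<phi> (indicator A))"
  unfolding daniell_measure_def
proof (rule emeasure_measure_of_sigma[OF sets.sigma_algebra_axioms _ countably_additive_indicator])
  have "indicator ({} :: 'a set) = (\<lambda>_. 0 :: real)"
    by auto
  then have "\<phi> (indicator {}) = 0"
    using const[of 0] by metis
  then show "positive (sets M) (\<lambda>A. ennreal (\<phi> (indicator A)))"
    by (simp add: positive_def)
qed

lemma prob_space_daniell_measure: "prob_space Q\<phi>"
proof (rule prob_spaceI)
  have "\<phi> (indicator (space M)) = \<phi> (\<lambda>_. 1)"
    by (intro cong Xspace_indicator Xspace_const AE_I2) auto
  then show "emeasure Q\<phi> (space Q\<phi>) = 1"
    by (simp add: space_daniell_measure emeasure_daniell_measure const)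
qed

interpretation Q\<phi>: prob_space Q\<phi>
  by (rule prob_space_daniell_measure)

lemma measure_daniell_measure: "A \<in> sets M \<Longrightarrow> measure Q\<phi> A = \<phi> (indicator A)"
  using emeasure_daniell_measure nonneg[OF Xspace_indicator AE_I2] by (simp add: measure_def)

lemma
  assumes "finite K" and "\<And>k. k \<in> K \<Longrightarrow> A k \<in> sets M"
  shows integrable_daniell_step: "integrable Q\<phi> (\<lambda>\<omega>. \<Sum>k\<in>K. c k * indicator (A k) \<omega>)"
    and integral_daniell_step:
      "integral\<^sup>L Q\<phi> (\<lambda>\<omega>. \<Sum>k\<in>K. c k * indicator (A k) \<omega>) = \<phi> (\<lambda>\<omega>. \<Sum>k\<in>K. c k * indicator (A k) \<omega>)"
proof -
  have A: "k \<in> K \<Longrightarrow> integrable Q\<phi> (indicator (A k) :: 'a \<Rightarrow> real)" for k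
    using assms(2) by (intro integrable_real_indicator)
      (auto simp: sets_daniell_measure less_top[symmetric] Q\<phi>.emeasure_finite)
  show "integrable Q\<phi> (\<lambda>\<omega>. \<Sum>k\<in>K. c k * indicator (A k) \<omega>)"
    using A by (intro Bochner_Integration.integrable_sum integrable_mult_right) auto
  have "integral\<^sup>L Q\<phi> (\<lambda>\<omega>. \<Sum>k\<in>K. c k * indicator (A k) \<omega>) = (\<Sum>k\<in>K. c k * measure Q\<phi> (A k))"
    using A assms(2) by (subst Bochner_Integration.integral_sum) (auto simp: sets_daniell_measure)
  also have "\<dots> = (\<Sum>k\<in>K. \<phi> (\<lambda>\<omega>. c k * indicator (A k) \<omega>))"
    using assms(2) by (intro sum.cong refl) (simp add: measure_daniell_measure homogeneous Xspace_indicator)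
  also have "\<dots> = \<phi> (\<lambda>\<omega>. \<Sum>k\<in>K. c k * indicator (A k) \<omega>)"
    using assms by (intro sum[symmetric] Xspace_scale Xspace_indicator) auto
  finally show "integral\<^sup>L Q\<phi> (\<lambda>\<omega>. \<Sum>k\<in>K. c k * indicator (A k) \<omega>) = \<phi> (\<lambda>\<omega>. \<Sum>k\<in>K. c k * indicator (A k) \<omega>)" .
qed

text \<open>Rounding \<open>X\<close> down to the grid \<open>\<int>/m\<close> gives a step function, on which \<open>\<phi>\<close> and the
  integral agree, and moves both of them by at most \<open>1/m\<close>.\<close>
lemma daniell_integral_close:
  assumes X: "X \<in> borel_measurable M" and bounded: "\<And>\<omega>. \<omega> \<in> space M \<Longrightarrow> 0 \<le> X \<omega> \<and> X \<omega> \<le> B"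
    and "0 < m"
  shows "\<bar>\<phi> X - integral\<^sup>L Q\<phi> X\<bar> \<le> 1 / m"
proof -
  have X_in: "X \<in> \<X>"
    using bounded by (intro Xspace_bounded[OF X]) force
  have "X \<in> borel_measurable Q\<phi>"
    using X measurable_cong_sets[OF sets_daniell_measure refl] by blast
  then have int_X: "integrable Q\<phi> X"
    using bounded by (intro Q\<phi>.integrable_const_bound[where B = B] AE_I2) (auto simp: space_daniell_measure)
  define A where "A k = {\<omega>\<in>space M. \<lfloor>m * X \<omega>\<rfloor> = k}" for k
  define s where "s \<omega> = (\<Sum>k\<in>{0..\<lfloor>m * B\<rfloor>}. real_of_int k / m * indicator (A k) \<omega>)" for \<omega>
  have A: "A k \<in> sets M" for k
    unfolding A_def using X by measurable
  have gap: "0 \<le> X \<omega> - s \<omega> \<and> X \<omega> - s \<omega> \<le> 1 / m" if \<omega>: "\<omega> \<in> space M" for \<omega>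
  proof -
    have "s \<omega> = \<lfloor>m * X \<omega>\<rfloor> / m"
      unfolding s_def A_def using bounded[OF \<omega>] \<open>0 < m\<close>
      by (intro floor_eq_sum_indicator[symmetric] \<omega>) auto
    then have "X \<omega> - s \<omega> = (m * X \<omega> - \<lfloor>m * X \<omega>\<rfloor>) / m"
      using \<open>0 < m\<close> by (simp add: field_simps)
    moreover have "0 \<le> m * X \<omega> - \<lfloor>m * X \<omega>\<rfloor>" "m * X \<omega> - \<lfloor>m * X \<omega>\<rfloor> \<le> 1"
      by linarith+
    ultimately show ?thesis
      using \<open>0 < m\<close> by (simp add: divide_right_mono)
  qed
  have s_in: "s \<in> \<X>"
    unfolding s_def[abs_def] using A by (intro Xspace_sum Xspace_scale Xspace_indicator) auto
  have int_s: "integrable Q\<phi> s" and "integral\<^sup>L Q\<phi> s = \<phi> s"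
    unfolding s_def[abs_def] using A
    by (intro integrable_daniell_step[where c = "\<lambda>k. real_of_int k / m"]
        integral_daniell_step[where c = "\<lambda>k. real_of_int k / m"]; simp)+
  moreover note bounds[OF Xspace_diff[OF X_in s_in] gap]
  moreover have "0 \<le> integral\<^sup>L Q\<phi> (\<lambda>\<omega>. X \<omega> - s \<omega>)"
    using gap by (intro integral_nonneg_AE AE_I2) (auto simp: space_daniell_measure)
  moreover have "integral\<^sup>L Q\<phi> (\<lambda>\<omega>. X \<omega> - s \<omega>) \<le> integral\<^sup>L Q\<phi> (\<lambda>_. 1 / m)"
    using gap int_X int_s by (intro integral_mono_AE AE_I2) (auto simp: space_daniell_measure)
  ultimately show ?thesis
    using int_X int_s by (simp add: diff[OF X_in s_in] Q\<phi>.prob_space abs_le_iff)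
qed

lemma
  assumes X: "X \<in> borel_measurable M" and bounded: "\<And>\<omega>. \<omega> \<in> space M \<Longrightarrow> 0 \<le> X \<omega> \<and> X \<omega> \<le> B"
  shows integrable_daniell_bounded: "integrable Q\<phi> X"
    and integral_daniell_bounded: "integral\<^sup>L Q\<phi> X = \<phi> X"
proof -
  have "X \<in> borel_measurable Q\<phi>"
    using X measurable_cong_sets[OF sets_daniell_measure refl] by blast
  then show "integrable Q\<phi> X"
    using bounded by (intro Q\<phi>.integrable_const_bound[where B = B] AE_I2) (auto simp: space_daniell_measure)
  have "\<bar>\<phi> X - integral\<^sup>L Q\<phi> X\<bar> \<le> e" if "0 < e" for e
  proof -
    obtain m :: nat where "0 < m" "inverse (real m) < e"
      using ex_inverse_of_nat_less[OF \<open>0 < e\<close>] by blast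
    then show ?thesis
      using daniell_integral_close[OF X bounded, of "real m"] by (simp add: inverse_eq_divide)
  qed
  then show "integral\<^sup>L Q\<phi> X = \<phi> X"
    using dense_eq0_I[of "\<phi> X - integral\<^sup>L Q\<phi> X"] by simp
qed

text \<open>Truncations \<open>min X n\<close> are bounded, and \<open>X - min X n\<close> decreases to \<open>0\<close>, so continuity
  from above transfers to \<open>\<phi>\<close> the monotone convergence of the integrals.\<close>
lemma integral_daniell_nonneg:
  assumes X_in: "X \<in> \<X>" and nonneg_X: "\<And>\<omega>. 0 \<le> X \<omega>"
  shows "integrable Q\<phi> X \<and> integral\<^sup>L Q\<phi> X = \<phi> X"
proof -
  define T where "T n \<omega> = min (X \<omega>) (real n)" for n \<omega>
  have X: "X \<in> borel_measurable M"
    by (rule Xspace_measurable[OF X_in])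
  have T_meas: "T n \<in> borel_measurable M" for n
    unfolding T_def using X by measurable
  have T_bounded: "0 \<le> T n \<omega> \<and> T n \<omega> \<le> real n" for n \<omega>
    using nonneg_X[of \<omega>] by (simp add: T_def)
  have T_in: "T n \<in> \<X>" for n
    using T_bounded by (intro Xspace_bounded[OF T_meas, where B = "real n"]) (simp add: abs_of_nonneg)
  have T: "T n \<in> \<X>" "integrable Q\<phi> (T n)" "integral\<^sup>L Q\<phi> (T n) = \<phi> (T n)" for n
    using T_in integrable_daniell_bounded[OF T_meas T_bounded] integral_daniell_bounded[OF T_meas T_bounded]
    by auto
  have T_lim: "(\<lambda>n. T n \<omega>) \<longlonglongrightarrow> X \<omega>" for \<omega>
  proof (rule tendsto_eventually, rule eventually_sequentiallyI)
    show "T n \<omega> = X \<omega>" if "nat \<lceil>X \<omega>\<rceil> \<le> n" for n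
      using that by (simp add: T_def)
  qed
  have T_mono: "mono (\<lambda>n. T n \<omega>)" for \<omega>
    by (auto simp: mono_def T_def)
  have "(\<lambda>n. X \<omega> - T n \<omega>) \<longlonglongrightarrow> X \<omega> - X \<omega>" for \<omega>
    by (intro tendsto_diff tendsto_const T_lim)
  moreover have "decseq (\<lambda>n. X \<omega> - T n \<omega>)" for \<omega>
    using T_mono[of \<omega>] by (auto simp: decseq_def mono_def)
  ultimately have "AE \<omega> in M. decseq (\<lambda>n. X \<omega> - T n \<omega>) \<and> (\<lambda>n. X \<omega> - T n \<omega>) \<longlonglongrightarrow> 0"
    by simp
  then have "(\<lambda>n. \<phi> (\<lambda>\<omega>. X \<omega> - T n \<omega>)) \<longlonglongrightarrow> 0"
    by (intro tendsto_zero Xspace_diff[OF X_in T(1)])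
  then have "(\<lambda>n. \<phi> X - \<phi> (\<lambda>\<omega>. X \<omega> - T n \<omega>)) \<longlonglongrightarrow> \<phi> X - 0"
    by (intro tendsto_diff tendsto_const)
  then have lim: "(\<lambda>n. integral\<^sup>L Q\<phi> (T n)) \<longlonglongrightarrow> \<phi> X"
    by (simp add: T(3) diff[OF X_in T(1)])
  have "X \<in> borel_measurable Q\<phi>"
    using X measurable_cong_sets[OF sets_daniell_measure refl] by blast
  moreover have "AE \<omega> in Q\<phi>. mono (\<lambda>n. T n \<omega>)" and "AE \<omega> in Q\<phi>. (\<lambda>n. T n \<omega>) \<longlonglongrightarrow> X \<omega>"
    using T_mono T_lim by simp_all
  ultimately show ?thesis
    using integrable_monotone_convergence[OF T(2) _ _ lim] integral_monotone_convergence[OF T(2) _ _ lim]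
    by blast
qed

lemma
  assumes "X \<in> \<X>"
  shows integrable_daniell: "integrable Q\<phi> X"
    and integral_daniell: "integral\<^sup>L Q\<phi> X = \<phi> X"
proof -
  define Xp where "Xp \<omega> = max (X \<omega>) 0" for \<omega>
  define Xm where "Xm \<omega> = max (- X \<omega>) 0" for \<omega>
  have X: "X \<in> borel_measurable M"
    by (rule Xspace_measurable[OF assms])
  have Xp: "Xp \<in> \<X>" and Xm: "Xm \<in> \<X>"
    unfolding Xp_def Xm_def using X by (auto intro!: Xspace_dominated[OF _ assms, where c = 0])
  have X_eq: "X = (\<lambda>\<omega>. Xp \<omega> - Xm \<omega>)"
    by (auto simp: Xp_def Xm_def)
  have "integrable Q\<phi> Xp \<and> integral\<^sup>L Q\<phi> Xp = \<phi> Xp"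
    by (rule integral_daniell_nonneg[OF Xp]) (simp add: Xp_def)
  moreover have "integrable Q\<phi> Xm \<and> integral\<^sup>L Q\<phi> Xm = \<phi> Xm"
    by (rule integral_daniell_nonneg[OF Xm]) (simp add: Xm_def)
  ultimately have "integrable Q\<phi> (\<lambda>\<omega>. Xp \<omega> - Xm \<omega>) \<and>
      integral\<^sup>L Q\<phi> (\<lambda>\<omega>. Xp \<omega> - Xm \<omega>) = \<phi> (\<lambda>\<omega>. Xp \<omega> - Xm \<omega>)"
    using diff[OF Xp Xm] by auto
  then show "integrable Q\<phi> X" and "integral\<^sup>L Q\<phi> X = \<phi> X"
    unfolding X_eq[symmetric] by auto
qed

lemma daniell_measure_in_Qbar: "Q\<phi> \<in> \<Q>bar"
  unfolding Qbar_def prob_on_def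
  by (simp add: prob_space_daniell_measure sets_daniell_measure integrable_daniell integral_daniell le_rhoQ)

end

section \<open>Convex combinations\<close>

definition mixture_integral :: "nat \<Rightarrow> (nat \<Rightarrow> real) \<Rightarrow> (nat \<Rightarrow> 'a measure) \<Rightarrow> ('a \<Rightarrow> real) \<Rightarrow> real" where
  "mixture_integral n c Q X = (\<Sum>i<n. c i * integral\<^sup>L (Q i) X)"

context upper_expectation
begin

definition convex_weights :: "nat \<Rightarrow> (nat \<Rightarrow> real) \<Rightarrow> (nat \<Rightarrow> 'a measure) \<Rightarrow> bool" where
  "convex_weights n c Q \<longleftrightarrow> 1 \<le> n \<and> (\<forall>i<n. 0 \<le> c i \<and> Q i \<in> Qs) \<and> (\<Sum>i<n. c i) = 1"

lemma dominated_functional_mixture: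
  assumes "convex_weights n c Q"
  shows "dominated_functional M Ys Qs (mixture_integral n c Q)"
proof (intro dominated_functional.intro upper_expectation_axioms dominated_functional_axioms.intro)
  have cQ: "i < n \<Longrightarrow> 0 \<le> c i \<and> Q i \<in> Qs" and c_sum: "(\<Sum>i<n. c i) = 1" for i
    using assms by (auto simp: convex_weights_def)
  show "mixture_integral n c Q (\<lambda>\<omega>. X \<omega> + Z \<omega>) = mixture_integral n c Q X + mixture_integral n c Q Z"
    if "X \<in> \<X>" "Z \<in> \<X>" for X Z
    unfolding mixture_integral_def using that cQ integrable_Xspace
    by (simp add: sum.distrib[symmetric] distrib_left Bochner_Integration.integral_add)
  show "mixture_integral n c Q (\<lambda>\<omega>. a * X \<omega>) = a * mixture_integral n c Q X" for X a
    unfolding mixture_integral_def by (simp add: sum_distrib_left mult.left_commute)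
  show "mixture_integral n c Q X \<le> \<rho> X" if "X \<in> \<X>" for X
  proof -
    have "mixture_integral n c Q X \<le> (\<Sum>i<n. c i * \<rho> X)"
      unfolding mixture_integral_def using cQ rhoQ_upper[OF that] by (intro sum_mono mult_left_mono) auto
    also have "\<dots> = \<rho> X"
      using c_sum by (simp add: sum_distrib_right[symmetric])
    finally show ?thesis .
  qed
qed

lemma emeasure_daniell_mixture:
  assumes "convex_weights n c Q" and "A \<in> sets M"
  shows "emeasure (daniell_measure M (mixture_integral n c Q)) A = (\<Sum>i<n. ennreal (c i) * emeasure (Q i) A)"
proof -
  have cQ: "i < n \<Longrightarrow> 0 \<le> c i \<and> Q i \<in> Qs" for i
    using assms(1) by (auto simp: convex_weights_def)
  have "emeasure (daniell_measure M (mixture_integral n c Q)) A = ennreal (\<Sum>i<n. c i * measure (Q i) A)"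
    using dominated_functional.emeasure_daniell_measure[OF dominated_functional_mixture[OF assms(1)] assms(2)]
      assms(2) cQ by (simp add: mixture_integral_def sets_Qs)
  also have "\<dots> = (\<Sum>i<n. ennreal (c i * measure (Q i) A))"
    using cQ by (subst sum_ennreal) auto
  also have "\<dots> = (\<Sum>i<n. ennreal (c i) * emeasure (Q i) A)"
    using cQ finite_measure.emeasure_eq_measure[OF prob_space.axioms(1), OF Qs_prob_space]
    by (intro sum.cong refl) (simp add: ennreal_mult)
  finally show ?thesis .
qed

lemma co_measures_iff_daniell_mixture:
  "\<mu> \<in> co_measures M Qs \<longleftrightarrow> (\<exists>n c Q. convex_weights n c Q \<and> \<mu> = daniell_measure M (mixture_integral n c Q))"
proof
  assume "\<mu> \<in> co_measures M Qs"
  then obtain n c Q where weights: "convex_weights n c Q" and "sets \<mu> = sets M"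
    and "\<forall>A\<in>sets M. emeasure \<mu> A = (\<Sum>i<n. ennreal (c i) * emeasure (Q i) A)"
    unfolding co_measures_def convex_weights_def by blast
  then have "\<mu> = daniell_measure M (mixture_integral n c Q)"
    using dominated_functional.sets_daniell_measure[OF dominated_functional_mixture[OF weights]]
    by (intro measure_eqI) (auto simp: emeasure_daniell_mixture)
  with weights show "\<exists>n c Q. convex_weights n c Q \<and> \<mu> = daniell_measure M (mixture_integral n c Q)"
    by blast
next
  assume "\<exists>n c Q. convex_weights n c Q \<and> \<mu> = daniell_measure M (mixture_integral n c Q)"
  then obtain n c Q where weights: "convex_weights n c Q" and \<mu>: "\<mu> = daniell_measure M (mixture_integral n c Q)"
    by blast
  then show "\<mu> \<in> co_measures M Qs"
    using dominated_functional.sets_daniell_measure[OF dominated_functional_mixture[OF weights]]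
      emeasure_daniell_mixture[OF weights]
    unfolding co_measures_def convex_weights_def by blast
qed

lemma co_measures_subset_Qbar: "co_measures M Qs \<subseteq> \<Q>bar"
proof
  fix \<mu> assume "\<mu> \<in> co_measures M Qs"
  then obtain n c Q where "convex_weights n c Q" and "\<mu> = daniell_measure M (mixture_integral n c Q)"
    using co_measures_iff_daniell_mixture by blast
  then show "\<mu> \<in> \<Q>bar"
    using dominated_functional.daniell_measure_in_Qbar[OF dominated_functional_mixture] by simp
qed

lemma co_measures_nonempty: "co_measures M Qs \<noteq> {}"
proof -
  obtain Q where "Q \<in> Qs"
    using Qs_nonempty by blast
  then have "convex_weights 1 (\<lambda>_. 1) (\<lambda>_. Q)"
    by (simp add: convex_weights_def)
  then show ?thesis
    using co_measures_iff_daniell_mixture by blast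
qed

lemma co_measures_mix:
  assumes "\<mu> \<in> co_measures M Qs" and "Q' \<in> Qs" and "0 \<le> t" and "t \<le> 1"
  shows "\<exists>\<mu>'\<in>co_measures M Qs. \<forall>X\<in>\<X>. integral\<^sup>L \<mu>' X = (1 - t) * integral\<^sup>L \<mu> X + t * integral\<^sup>L Q' X"
proof -
  obtain n c Q where weights: "convex_weights n c Q" and \<mu>: "\<mu> = daniell_measure M (mixture_integral n c Q)"
    using assms(1) co_measures_iff_daniell_mixture by blast
  define c' where "c' i = (if i < n then (1 - t) * c i else t)" for i
  define Q'' where "Q'' i = (if i < n then Q i else Q')" for i
  have weights': "convex_weights (Suc n) c' Q''"
    using weights assms(2-4) by (auto simp: convex_weights_def c'_def Q''_def less_Suc_eq sum_distrib_left[symmetric])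
  have mix: "mixture_integral (Suc n) c' Q'' X = (1 - t) * mixture_integral n c Q X + t * integral\<^sup>L Q' X" for X
    by (simp add: mixture_integral_def c'_def Q''_def sum_distrib_left mult.assoc)
  show ?thesis
  proof (intro bexI ballI)
    show "daniell_measure M (mixture_integral (Suc n) c' Q'') \<in> co_measures M Qs"
      using weights' co_measures_iff_daniell_mixture by blast
    fix X assume "X \<in> \<X>"
    then show "integral\<^sup>L (daniell_measure M (mixture_integral (Suc n) c' Q'')) X = (1 - t) * integral\<^sup>L \<mu> X + t * integral\<^sup>L Q' X"
      using dominated_functional.integral_daniell[OF dominated_functional_mixture[OF weights']]
        dominated_functional.integral_daniell[OF dominated_functional_mixture[OF weights]]
      by (simp add: \<mu> mix)
  qed
qed

section \<open>The topology \<open>\<sigma>(\<Q>bar, \<X>)\<close>\<close>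

abbreviation "integrals Q \<equiv> restrict (\<lambda>X. integral\<^sup>L Q X) \<X>"

lemma sigmaQX_eq: "sigmaQX M Ys Qs = pullback_topology \<Q>bar integrals (powertop_real \<X>)"
  by (simp add: sigmaQX_def)

lemma topspace_sigmaQX: "topspace (sigmaQX M Ys Qs) = \<Q>bar"
  by (auto simp: sigmaQX_eq topspace_pullback_topology)

lemma integral_sum_Xspace:
  assumes "Q \<in> \<Q>bar" and "finite F" and "F \<subseteq> \<X>"
  shows "integral\<^sup>L Q (\<lambda>\<omega>. \<Sum>X\<in>F. a X * X \<omega>) = (\<Sum>X\<in>F. a X * integral\<^sup>L Q X)"
  using assms integrable_Qbar by (subst Bochner_Integration.integral_sum) auto

lemma abs_integral_Qbar_le:
  assumes "Q \<in> \<Q>bar" and "X \<in> \<X>"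
  shows "\<bar>integral\<^sup>L Q X\<bar> \<le> \<bar>\<rho> X\<bar> + \<bar>\<rho> (\<lambda>\<omega>. - X \<omega>)\<bar>"
  using integral_Qbar_bounds[OF assms] by linarith

lemma Qbar_linear_constraint:
  assumes "Q \<in> \<Q>bar" and "finite F" and "F \<subseteq> \<X>"
    and "\<And>Q'. Q' \<in> Qs \<Longrightarrow> (\<Sum>X\<in>F. a X * integral\<^sup>L Q' X) \<le> b"
  shows "(\<Sum>X\<in>F. a X * integral\<^sup>L Q X) \<le> b"
proof -
  define Z where "Z \<omega> = (\<Sum>X\<in>F. a X * X \<omega>)" for \<omega>
  have Z: "Z \<in> \<X>"
    unfolding Z_def[abs_def] using assms(2,3) by (intro Xspace_sum Xspace_scale) auto
  have "\<rho> Z \<le> b"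
    using assms(4) Qs_subset_Qbar integral_sum_Xspace[OF _ assms(2,3)]
    by (intro rhoQ_least) (auto simp: Z_def[abs_def])
  then show ?thesis
    using integral_Qbar_le[OF assms(1) Z] integral_sum_Xspace[OF assms(1-3)] by (simp add: Z_def[abs_def])
qed

lemma Qbar_approx_by_co_measures:
  assumes "Q \<in> \<Q>bar" and "finite F" and "F \<subseteq> \<X>" and "0 < \<epsilon>"
  shows "\<exists>\<mu>\<in>co_measures M Qs. \<forall>X\<in>F. \<bar>integral\<^sup>L \<mu> X - integral\<^sup>L Q X\<bar> < \<epsilon>"
proof -
  let ?C = "(\<lambda>\<mu> X. integral\<^sup>L \<mu> X) ` co_measures M Qs"
  let ?G = "(\<lambda>Q X. integral\<^sup>L Q X) ` Qs"
  have "\<exists>\<psi>\<in>?C. \<forall>X\<in>F. \<bar>\<psi> X - integral\<^sup>L Q X\<bar> < \<epsilon>"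
  proof (rule approximation_by_mixing[where K = "\<lambda>X. \<bar>\<rho> X\<bar> + \<bar>\<rho> (\<lambda>\<omega>. - X \<omega>)\<bar>"])
    show "finite F" "?C \<noteq> {}" "0 < \<epsilon>"
      using assms co_measures_nonempty by auto
    show "\<exists>\<psi>'\<in>?C. \<forall>X\<in>F. \<psi>' X = (1 - t) * \<psi> X + t * g X"
      if \<psi>: "\<psi> \<in> ?C" and g: "g \<in> ?G" and t: "0 < t" "t \<le> 1" for \<psi> g t
    proof -
      obtain \<mu> Q' where \<mu>: "\<mu> \<in> co_measures M Qs" "\<psi> = (\<lambda>X. integral\<^sup>L \<mu> X)"
        and Q': "Q' \<in> Qs" "g = (\<lambda>X. integral\<^sup>L Q' X)"
        using \<psi> g by blast
      obtain \<mu>' where "\<mu>' \<in> co_measures M Qs"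
        and "\<forall>X\<in>\<X>. integral\<^sup>L \<mu>' X = (1 - t) * integral\<^sup>L \<mu> X + t * integral\<^sup>L Q' X"
        using co_measures_mix[OF \<mu>(1) Q'(1) less_imp_le[OF t(1)] t(2)] by blast
      then show ?thesis
        using assms(3) \<mu>(2) Q'(2) by (intro bexI[of _ "\<lambda>X. integral\<^sup>L \<mu>' X"]) auto
    qed
    show "\<bar>\<psi> X\<bar> \<le> \<bar>\<rho> X\<bar> + \<bar>\<rho> (\<lambda>\<omega>. - X \<omega>)\<bar>" if "\<psi> \<in> ?C \<union> ?G" and "X \<in> F" for \<psi> X
      using that co_measures_subset_Qbar Qs_subset_Qbar assms(3) abs_integral_Qbar_le by blast
    show "(\<Sum>X\<in>F. a X * integral\<^sup>L Q X) \<le> b"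
      if "\<And>g. g \<in> ?G \<Longrightarrow> (\<Sum>X\<in>F. a X * g X) \<le> b" for a b
      using that by (intro Qbar_linear_constraint[OF assms(1-3)]) blast
  qed
  then show ?thesis
    by blast
qed

lemma Qbar_subset_closure_co_measures: "\<Q>bar \<subseteq> sigmaQX M Ys Qs closure_of co_measures M Qs"
proof
  fix Q assume Q: "Q \<in> \<Q>bar"
  have "\<exists>\<psi>\<in>integrals ` (co_measures M Qs \<inter> \<Q>bar). \<forall>X\<in>F. \<bar>\<psi> X - integrals Q X\<bar> < \<epsilon>"
    if F: "finite F" "F \<subseteq> \<X>" and "0 < \<epsilon>" for F \<epsilon>
  proof -
    obtain \<mu> where "\<mu> \<in> co_measures M Qs" "\<forall>X\<in>F. \<bar>integral\<^sup>L \<mu> X - integral\<^sup>L Q X\<bar> < \<epsilon>"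
      using Qbar_approx_by_co_measures[OF Q F \<open>0 < \<epsilon>\<close>] by blast
    then show ?thesis
      using F(2) co_measures_subset_Qbar by (intro bexI[of _ "integrals \<mu>"]) auto
  qed
  then have "integrals Q \<in> powertop_real \<X> closure_of (integrals ` (co_measures M Qs \<inter> \<Q>bar))"
    by (subst in_closure_of_powertop_real) auto
  then show "Q \<in> sigmaQX M Ys Qs closure_of co_measures M Qs"
    using Q by (simp add: sigmaQX_eq in_closure_of_pullback_topology)
qed

text \<open>Each defining condition of a dominated functional constrains finitely many coordinates
  continuously, so it survives passage to the closure.\<close>
lemma closure_integrals_dominated_functional:
  assumes "\<phi> \<in> powertop_real \<X> closure_of (integrals ` \<Q>bar)"
  shows "dominated_functional M Ys Qs \<phi>"
proof -
  have closed: "g \<phi> \<in> C" if "continuous_map (powertop_real \<X>) euclideanreal g" "closed C" "\<And>Q. Q \<in> \<Q>bar \<Longrightarrow> g (integrals Q) \<in> C"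
    for g C
  proof -
    have "g ` (powertop_real \<X> closure_of (integrals ` \<Q>bar)) \<subseteq> euclideanreal closure_of (g ` integrals ` \<Q>bar)"
      using that(1) by (rule continuous_map_image_closure_subset)
    also have "\<dots> \<subseteq> C"
      using that(3) closed_closedin[THEN iffD1, OF that(2)] by (intro closure_of_minimal) auto
    finally show ?thesis
      using assms by blast
  qed
  have proj: "continuous_map (powertop_real \<X>) euclideanreal (\<lambda>\<phi>. \<phi> X)" if "X \<in> \<X>" for X
    by (rule continuous_map_product_projection[OF that])
  show ?thesis
  proof (intro dominated_functional.intro upper_expectation_axioms dominated_functional_axioms.intro)
    fix X Z assume X: "X \<in> \<X>" and Z: "Z \<in> \<X>"
    have W: "(\<lambda>\<omega>. X \<omega> + Z \<omega>) \<in> \<X>"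
      by (rule Xspace_add[OF X Z])
    have "\<phi> (\<lambda>\<omega>. X \<omega> + Z \<omega>) - \<phi> X - \<phi> Z \<in> {0}"
    proof (rule closed)
      show "continuous_map (powertop_real \<X>) euclideanreal (\<lambda>\<phi>. \<phi> (\<lambda>\<omega>. X \<omega> + Z \<omega>) - \<phi> X - \<phi> Z)"
        by (intro continuous_map_diff proj X Z W)
      fix Q assume Q: "Q \<in> \<Q>bar"
      show "integrals Q (\<lambda>\<omega>. X \<omega> + Z \<omega>) - integrals Q X - integrals Q Z \<in> {0}"
        using X Z W integrable_Qbar[OF Q X] integrable_Qbar[OF Q Z] by simp
    qed simp
    then show "\<phi> (\<lambda>\<omega>. X \<omega> + Z \<omega>) = \<phi> X + \<phi> Z"
      by simp
  next
    fix X c assume X: "X \<in> \<X>"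
    have cX: "(\<lambda>\<omega>. c * X \<omega>) \<in> \<X>"
      by (rule Xspace_scale[OF X])
    have "\<phi> (\<lambda>\<omega>. c * X \<omega>) - c * \<phi> X \<in> {0}"
    proof (rule closed)
      show "continuous_map (powertop_real \<X>) euclideanreal (\<lambda>\<phi>. \<phi> (\<lambda>\<omega>. c * X \<omega>) - c * \<phi> X)"
        by (intro continuous_map_diff continuous_map_real_mult_left proj X cX)
      fix Q assume "Q \<in> \<Q>bar"
      show "integrals Q (\<lambda>\<omega>. c * X \<omega>) - c * integrals Q X \<in> {0}"
        using X cX by simp
    qed simp
    then show "\<phi> (\<lambda>\<omega>. c * X \<omega>) = c * \<phi> X"
      by simp
  next
    fix X assume X: "X \<in> \<X>"
    have "\<phi> X \<in> {..\<rho> X}"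
    proof (rule closed)
      show "continuous_map (powertop_real \<X>) euclideanreal (\<lambda>\<phi>. \<phi> X)"
        by (rule proj[OF X])
      fix Q assume "Q \<in> \<Q>bar"
      then show "integrals Q X \<in> {..\<rho> X}"
        using X integral_Qbar_le by simp
    qed simp
    then show "\<phi> X \<le> \<rho> X"
      by simp
  qed
qed

lemma closedin_integrals_Qbar: "closedin (powertop_real \<X>) (integrals ` \<Q>bar)"
proof -
  have "powertop_real \<X> closure_of (integrals ` \<Q>bar) \<subseteq> integrals ` \<Q>bar"
  proof
    fix \<phi> assume \<phi>: "\<phi> \<in> powertop_real \<X> closure_of (integrals ` \<Q>bar)"
    interpret dominated_functional M Ys Qs \<phi>
      by (rule closure_integrals_dominated_functional[OF \<phi>])
    have "\<phi> \<in> topspace (powertop_real \<X>)"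
      using \<phi> by (simp add: in_closure_of)
    then have "\<phi> \<in> extensional \<X>"
      by (simp add: PiE_def)
    then have "integrals Q\<phi> = \<phi>"
      by (auto simp: integral_daniell extensional_def)
    then show "\<phi> \<in> integrals ` \<Q>bar"
      using daniell_measure_in_Qbar by (intro rev_image_eqI) auto
  qed
  moreover have "integrals ` \<Q>bar \<subseteq> topspace (powertop_real \<X>)"
    by auto
  ultimately show ?thesis
    using closure_of_subset_eq by blast
qed

lemma compact_space_sigmaQX: "compact_space (sigmaQX M Ys Qs)"
proof -
  have "compactin (powertop_real \<X>) (\<Pi>\<^sub>E X\<in>\<X>. {- \<rho> (\<lambda>\<omega>. - X \<omega>) .. \<rho> X})"
    by (simp add: compactin_PiE)
  moreover have "integrals ` \<Q>bar \<subseteq> (\<Pi>\<^sub>E X\<in>\<X>. {- \<rho> (\<lambda>\<omega>. - X \<omega>) .. \<rho> X})"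
    using integral_Qbar_bounds by auto
  ultimately have "compactin (powertop_real \<X>) (integrals ` \<Q>bar)"
    using closed_compactin closedin_integrals_Qbar by blast
  then show ?thesis
    unfolding sigmaQX_eq by (rule compact_space_pullback_topology)
qed

end

theorem lemma6p1:
  fixes M :: "'a measure" and T :: real and Fs :: "real \<Rightarrow> 'a set set"
    and Y :: "real \<Rightarrow> 'a \<Rightarrow> real" and Qs :: "'a measure set"
  assumes "prob_space M"
    and "0 < T"
    and "filtration_std M T Fs"
    and "process_std M T Fs Y"
    and "Qs \<noteq> {}"
    and "\<forall>Q\<in>Qs. prob_on M Q \<and> absolutely_continuous M Q"
    and "L1Q M Qs (Ystar T Y)"
    and "cont_from_above_at_0 M (Ystar T Y) Qs"
  shows "compact_space (sigmaQX M (Ystar T Y) Qs)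
    \<and> co_measures M Qs \<subseteq> Qbar M (Ystar T Y) Qs
    \<and> (sigmaQX M (Ystar T Y) Qs) closure_of (co_measures M Qs) = Qbar M (Ystar T Y) Qs
    \<and> (\<forall>Q\<in>Qbar M (Ystar T Y) Qs. absolutely_continuous M Q)"
proof -
  have "0 \<le> Ystar T Y \<omega>" if "\<omega> \<in> space M" for \<omega>
    using assms(2,4) that unfolding process_std_def by (metis Ystar_nonneg less_imp_le)
  then interpret upper_expectation M "Ystar T Y" Qs
    using assms(5-8) by (intro upper_expectation.intro) (auto simp: L1Q_def)
  have "sigmaQX M (Ystar T Y) Qs closure_of co_measures M Qs = \<Q>bar"
    using Qbar_subset_closure_co_measures closure_of_subset_topspace[of "sigmaQX M (Ystar T Y) Qs"]
    by (auto simp: topspace_sigmaQX)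
  then show ?thesis
    using compact_space_sigmaQX co_measures_subset_Qbar Qbar_absolutely_continuous by blast
qed

end
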